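(* Work in ZFC together with the Continuum Hypothesis. Let $(\Omega,\mathcal{F})$ be a measurable space with a right-continuous filtration $\mathbb{F}=(\mathcal{F}_t)_{t\in[0,1]}$, $\mathcal{P}$ a family of probability measures on $(\Omega,\mathcal{F})$, and $\mathbb{F}^*=(\mathcal{F}^*_t)_{t\in[0,1]}$ with $\mathcal{F}^*_t:=\bigcap_{P\in\mathcal{P}}\mathcal{F}_t\vee\mathcal{N}^P$, where $\mathcal{N}^P$ is the collection of $(\mathcal{F},P)$-null sets. Let $(Y^n)_{n\ge1}$ be a sequence of $\mathbb{F}^*$-adapted càdlàg processes. Assume that for each $P\in\mathcal{P}$ there exists a càdlàg process $Y^P$ such that $Y^n_t\to Y^P_t$ in $P$-probability for all $t\in[0,1]$. Then there exists an $\mathbb{F}^*$-adapted càdlàg process $Y$ such that $Y=Y^P$ $P$-a.s. for all $P\in\mathcal{P}$. *)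

theory Defs
  imports "HOL-Probability.Probability"
begin

definition CH :: bool where
  "CH \<longleftrightarrow> (\<forall>A :: real set. countable A \<or> (\<exists>f. bij_betw f A (UNIV :: real set)))"

definition filtration :: "'a measure \<Rightarrow> (real \<Rightarrow> 'a set set) \<Rightarrow> bool" where
  "filtration M F \<longleftrightarrow>
     (\<forall>t\<in>{0..1}. sigma_algebra (space M) (F t) \<and> F t \<subseteq> sets M) \<and>
     (\<forall>s t. 0 \<le> s \<longrightarrow> s \<le> t \<longrightarrow> t \<le> 1 \<longrightarrow> F s \<subseteq> F t)"

definition right_continuous_filtration :: "'a measure \<Rightarrow> (real \<Rightarrow> 'a set set) \<Rightarrow> bool" where
  "right_continuous_filtration M F \<longleftrightarrow> filtration M F \<and>
     (\<forall>t\<in>{0..<1}. F t = (\<Inter>s\<in>{t<..1}. F s))"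

definition null_sets_of :: "'a measure \<Rightarrow> 'a measure \<Rightarrow> 'a set set" where
  "null_sets_of M P = {A. A \<subseteq> space M \<and> (\<exists>B\<in>sets M. A \<subseteq> B \<and> emeasure P B = 0)}"

definition Fstar :: "'a measure \<Rightarrow> 'a measure set \<Rightarrow> (real \<Rightarrow> 'a set set) \<Rightarrow> real \<Rightarrow> 'a set set" where
  "Fstar M \<P> F t = Pow (space M) \<inter>
     (\<Inter>P\<in>\<P>. sigma_sets (space M) (F t \<union> null_sets_of M P))"

definition adapted :: "'a measure \<Rightarrow> (real \<Rightarrow> 'a set set) \<Rightarrow> (real \<Rightarrow> 'a \<Rightarrow> real) \<Rightarrow> bool" where
  "adapted M G Y \<longleftrightarrow> (\<forall>t\<in>{0..1}. Y t \<in> measurable (sigma (space M) (G t)) borel)"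

definition cadlag_path :: "(real \<Rightarrow> real) \<Rightarrow> bool" where
  "cadlag_path f \<longleftrightarrow> (\<forall>t\<in>{0..<1}. (f \<longlongrightarrow> f t) (at_right t)) \<and>
                       (\<forall>t\<in>{0<..1}. \<exists>l. (f \<longlongrightarrow> l) (at_left t))"

definition cadlag :: "'a measure \<Rightarrow> (real \<Rightarrow> 'a \<Rightarrow> real) \<Rightarrow> bool" where
  "cadlag M Y \<longleftrightarrow> (\<forall>\<omega>\<in>space M. cadlag_path (\<lambda>t. Y t \<omega>))"

end

theory Submission
  imports Defs
begin

text \<open>Under CH there is a family \<open>(S\<^sub>g)\<close> of infinite subsets of \<open>\<nat>\<close>, indexed by
  \<open>g \<in> \<nat>\<^sup>\<nat>\<close> and directed under almost inclusion, such that \<open>S\<^sub>g\<close> is the range of a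
  subsequence dominating \<open>g\<close>. Taking limits along this family gives a functional \<open>L\<close> on real
  sequences such that for every growth rate \<open>g\<close> some subsequence \<open>h\<close> dominating \<open>g\<close> satisfies
  \<open>L x = lim\<^sub>j x(h j)\<close> whenever that limit exists. Convergence in \<open>P\<close>-probability yields a growth rate
  beyond which every subsequence converges \<open>P\<close>-a.s., so \<open>L(Y\<^sup>n\<^sub>t) = Y\<^sup>P\<^sub>t\<close> \<open>P\<close>-a.s. for
  every \<open>P\<close> at once, and \<open>L(Y\<^sup>n\<^sub>t)\<close> is an a.s. limit of \<open>\<F>\<^sub>t \<or> \<N>\<^sup>P\<close>-measurable variables for
  every \<open>P\<close>, hence \<open>\<F>\<^sup>*\<^sub>t\<close>-measurable. The process \<open>Y\<close> is the cadlag path through the values of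
  \<open>L(Y\<^sup>n\<^sub>s)\<close> at rational \<open>s\<close>.\<close>

section \<open>A directed family of dominating subsequences under CH\<close>

definition dominating_range :: "nat set \<Rightarrow> (nat \<Rightarrow> nat) \<Rightarrow> bool" where
  "dominating_range S g \<longleftrightarrow> (\<exists>h. strict_mono h \<and> S = range h \<and> (\<forall>j. g j \<le> h j))"

lemma dominating_range_infinite: "dominating_range S g \<Longrightarrow> infinite S"
  unfolding dominating_range_def using strict_mono_imp_inj_on range_inj_infinite by blast

lemma countable_pseudo_intersection_dominating:
  fixes T :: "'i \<Rightarrow> nat set"
  assumes I: "countable I"
    and fip: "\<And>J. finite J \<Longrightarrow> J \<subseteq> I \<Longrightarrow> infinite (\<Inter>i\<in>J. T i)"
  shows "\<exists>S. dominating_range S g \<and> (\<forall>i\<in>I. finite (S - T i))"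
proof -
  define e where "e = from_nat_into I"
  define U where "U j = (\<Inter>i\<in>I \<inter> e ` {..j}. T i)" for j
  \<comment> \<open>choosing \<open>h j \<in> U j\<close> puts all but the first \<open>k\<close> values of \<open>h\<close> into \<open>T (e k)\<close>\<close>
  have "infinite (U j)" for j unfolding U_def by (rule fip) auto
  then have "\<exists>n. n \<in> U j \<and> lo \<le> n" for j lo using infinite_nat_iff_unbounded_le by blast
  then obtain pick where pick: "\<And>j lo. pick j lo \<in> U j \<and> lo \<le> pick j lo" by metis
  define h where "h = rec_nat (pick 0 (g 0)) (\<lambda>j hj. pick (Suc j) (max (g (Suc j)) (hj + 1)))"
  have h0: "h 0 = pick 0 (g 0)" and hS: "h (Suc j) = pick (Suc j) (max (g (Suc j)) (h j + 1))" for j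
    unfolding h_def by simp_all
  have hU: "h j \<in> U j" and hg: "g j \<le> h j" for j
    using pick[of 0 "g 0"] pick[of j "max (g j) (h (j - 1) + 1)"] hS[of "j - 1"] h0
    by (cases j; simp)+
  have "h j < h (Suc j)" for j using pick[of "Suc j" "max (g (Suc j)) (h j + 1)"] hS[of j] by simp
  then have mono: "strict_mono h" by (rule strict_monoI_Suc)
  have "finite (range h - T i)" if iI: "i \<in> I" for i
  proof -
    obtain k where k: "e k = i" using from_nat_into_surj[OF I iI] unfolding e_def by blast
    have "U j \<subseteq> T i" if "k \<le> j" for j using that k iI unfolding U_def by blast
    then have "range h - T i \<subseteq> h ` {..<k}" using hU by (auto simp: not_less[symmetric])
    then show ?thesis by (rule finite_subset) auto
  qed
  then show ?thesis unfolding dominating_range_def using mono hg by blast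
qed

lemma inj_nat_fun_into_real: "\<exists>\<iota> :: (nat \<Rightarrow> nat) \<Rightarrow> real. inj \<iota>"
proof -
  define graph where "graph f = range (\<lambda>n. prod_encode (n, f n))" for f :: "nat \<Rightarrow> nat"
  have "inj graph"
  proof (rule injI)
    fix f g assume eq: "graph f = graph g"
    show "f = g"
    proof
      fix n
      have "prod_encode (n, f n) \<in> graph g" using eq unfolding graph_def by blast
      then obtain m where "prod_encode (n, f n) = prod_encode (m, g m)" unfolding graph_def by blast
      then show "f n = g n" by (auto simp: prod_encode_eq)
    qed
  qed
  moreover obtain b :: "nat set \<Rightarrow> real" where "bij b"
    using nat_sets_eqpoll_reals unfolding eqpoll_def by blast
  ultimately have "inj (b \<circ> graph)" by (simp add: bij_is_inj inj_compose)
  then show ?thesis by blast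
qed

lemma CH_wellorder_countable_initial_segments:
  assumes CH
  shows "\<exists>R :: (real \<times> real) set. wf R \<and> (\<forall>x y. x \<noteq> y \<longrightarrow> (x,y) \<in> R \<or> (y,x) \<in> R)
     \<and> (\<forall>x. countable {y. (y,x) \<in> R})"
proof -
  define W where "W = card_of (UNIV :: real set)"
  have WO: "Well_order W" unfolding W_def by (rule card_of_Well_order)
  have F: "Field W = UNIV" unfolding W_def by (rule Field_card_of)
  have CO: "Card_order W" unfolding W_def by (rule card_of_Card_order)
  define R where "R = W - Id"
  have wf: "wf R" using WO unfolding R_def well_order_on_def by blast
  have tot: "(x,y) \<in> R \<or> (y,x) \<in> R" if "x \<noteq> y" for x y
    using WO F that unfolding R_def well_order_on_def linear_order_on_def total_on_def by auto
  have "countable {y. (y,x) \<in> R}" for x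
  proof (rule ccontr)
    have eq: "{y. (y,x) \<in> R} = underS W x" unfolding R_def underS_def by auto
    assume "\<not> countable {y. (y,x) \<in> R}"
    then obtain f where "bij_betw f (underS W x) (UNIV :: real set)"
      using assms unfolding CH_def eq by blast
    then have "(card_of (underS W x), W) \<in> ordIso" unfolding W_def using card_of_ordIso by blast
    moreover have "(card_of (underS W x), W) \<in> ordLess" using card_of_underS[OF CO] F by auto
    ultimately show False using not_ordLess_ordIso by blast
  qed
  then show ?thesis using wf tot by blast
qed

lemma finite_chain_Inter_infinite:
  fixes S :: "'b \<Rightarrow> nat set"
  assumes "finite J"
    and chain: "\<And>a b. a \<in> J \<Longrightarrow> b \<in> J \<Longrightarrow> a \<noteq> b \<Longrightarrow> (a,b) \<in> R \<or> (b,a) \<in> R"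
    and almost_sub: "\<And>a b. a \<in> J \<Longrightarrow> b \<in> J \<Longrightarrow> (b,a) \<in> R \<Longrightarrow> finite (S a - S b)"
    and inf: "\<And>a. a \<in> J \<Longrightarrow> infinite (S a)"
  shows "infinite (\<Inter>i\<in>J. S i)"
proof (cases "J = {}")
  case False
  have "\<exists>m\<in>J. \<forall>y\<in>J. finite (S m - S y)"
    using \<open>finite J\<close> False chain almost_sub
  proof (induction J rule: finite_ne_induct)
    case (insert a J)
    then obtain m where m: "m \<in> J" "\<forall>y\<in>J. finite (S m - S y)" by auto
    have "a \<noteq> m" using insert m by auto
    then consider "(a,m) \<in> R" | "(m,a) \<in> R" using insert.prems m by blast
    then show ?case
    proof cases
      case 1
      then have "finite (S m - S a)" using insert.prems m by auto
      then show ?thesis using m by auto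
    next
      case 2
      then have "finite (S a - S m)" using insert.prems m by auto
      moreover have "S a - S y \<subseteq> (S a - S m) \<union> (S m - S y)" for y by auto
      ultimately have "finite (S a - S y)" if "y \<in> J" for y
        using m that by (meson finite_Un finite_subset)
      then show ?thesis by auto
    qed
  qed simp
  then obtain m where m: "m \<in> J" "\<forall>y\<in>J. finite (S m - S y)" by blast
  have "finite (\<Union>y\<in>J. S m - S y)" using m \<open>finite J\<close> by (intro finite_UN_I) auto
  then have "infinite (S m - (\<Union>y\<in>J. S m - S y))" using inf[OF m(1)] by (rule Diff_infinite_finite)
  moreover have "S m - (\<Union>y\<in>J. S m - S y) \<subseteq> (\<Inter>i\<in>J. S i)" by auto
  ultimately show ?thesis using infinite_super by blast
qed simp

lemma wf_almost_decreasing_dominating_family: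
  fixes R :: "('b \<times> 'b) set" and \<psi> :: "'b \<Rightarrow> nat \<Rightarrow> nat"
  assumes wf: "wf R" and tot: "\<And>x y. x \<noteq> y \<Longrightarrow> (x,y) \<in> R \<or> (y,x) \<in> R"
    and cnt: "\<And>x. countable {y. (y,x) \<in> R}"
  shows "\<exists>S. \<forall>x. dominating_range (S x) (\<psi> x) \<and> (\<forall>y. (y,x) \<in> R \<longrightarrow> finite (S x - S y))"
proof -
  define step where "step T x = (SOME S. dominating_range S (\<psi> x) \<and> (\<forall>y. (y,x) \<in> R \<longrightarrow> finite (S - T y)))"
    for T :: "'b \<Rightarrow> nat set" and x
  define S where "S = wfrec R step"
  have "dominating_range (S x) (\<psi> x) \<and> (\<forall>y. (y,x) \<in> R \<longrightarrow> finite (S x - S y))" for x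
    using wf
  proof (induction x rule: wf_induct_rule)
    case (less x)
    have "S x = step (cut S R x) x" unfolding S_def by (rule wfrec[OF wf])
    also have "\<dots> = step S x" unfolding step_def cut_def by (rule arg_cong[where f=Eps]) auto
    finally have unfold: "S x = step S x" .
    have "infinite (\<Inter>i\<in>J. S i)" if J: "finite J" "J \<subseteq> {y. (y,x) \<in> R}" for J
    proof (rule finite_chain_Inter_infinite[OF J(1)])
      show "(a,b) \<in> R \<or> (b,a) \<in> R" if "a \<in> J" "b \<in> J" "a \<noteq> b" for a b
        using tot that by blast
      show "finite (S a - S b)" if "a \<in> J" "b \<in> J" "(b,a) \<in> R" for a b
        using less that J(2) by blast
      show "infinite (S a)" if "a \<in> J" for a
        using less that J(2) dominating_range_infinite by blast
    qed
    then have "\<exists>T. dominating_range T (\<psi> x) \<and> (\<forall>y\<in>{y. (y,x) \<in> R}. finite (T - S y))"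
      by (rule countable_pseudo_intersection_dominating[OF cnt])
    then have "\<exists>T. dominating_range T (\<psi> x) \<and> (\<forall>y. (y,x) \<in> R \<longrightarrow> finite (T - S y))" by blast
    then show ?case unfolding unfold step_def by (rule someI_ex)
  qed
  then show ?thesis by blast
qed

lemma CH_directed_dominating_family:
  assumes CH
  shows "\<exists>S :: (nat \<Rightarrow> nat) \<Rightarrow> nat set. (\<forall>g. dominating_range (S g) g) \<and>
     (\<forall>g1 g2. \<exists>g. finite (S g - S g1) \<and> finite (S g - S g2))"
proof -
  obtain \<iota> :: "(nat \<Rightarrow> nat) \<Rightarrow> real" where inj: "inj \<iota>" using inj_nat_fun_into_real by blast
  obtain R :: "(real \<times> real) set" where "wf R" and tot: "\<And>x y. x \<noteq> y \<Longrightarrow> (x,y) \<in> R \<or> (y,x) \<in> R"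
    and "\<And>x. countable {y. (y,x) \<in> R}"
    using CH_wellorder_countable_initial_segments[OF assms] by blast
  then obtain T where T: "\<And>x. dominating_range (T x) (inv \<iota> x)"
    and T_dec: "\<And>x y. (y,x) \<in> R \<Longrightarrow> finite (T x - T y)"
    using wf_almost_decreasing_dominating_family[of R "inv \<iota>"] by blast
  define S where "S g = T (\<iota> g)" for g
  have "dominating_range (S g) g" for g using T[of "\<iota> g"] inj unfolding S_def by simp
  moreover have "\<exists>g. finite (S g - S g1) \<and> finite (S g - S g2)" for g1 g2
  proof (cases "\<iota> g1 = \<iota> g2")
    case False
    then consider "(\<iota> g1, \<iota> g2) \<in> R" | "(\<iota> g2, \<iota> g1) \<in> R" using tot by blast
    then show ?thesis
    proof cases
      case 1
      then show ?thesis using T_dec unfolding S_def by (intro exI[of _ g2]) auto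
    next
      case 2
      then show ?thesis using T_dec unfolding S_def by (intro exI[of _ g1]) auto
    qed
  qed (intro exI[of _ g1], simp add: S_def)
  ultimately show ?thesis by blast
qed

definition converges_along :: "nat set \<Rightarrow> (nat \<Rightarrow> real) \<Rightarrow> real \<Rightarrow> bool" where
  "converges_along S x a \<longleftrightarrow> (\<forall>\<epsilon>>0. finite {n\<in>S. \<epsilon> \<le> \<bar>x n - a\<bar>})"

lemma converges_along_range:
  assumes "(\<lambda>j. x (h j)) \<longlonglongrightarrow> a"
  shows "converges_along (range h) x a"
  unfolding converges_along_def
proof (intro allI impI)
  fix \<epsilon> :: real assume "\<epsilon> > 0"
  then obtain N where N: "\<forall>j\<ge>N. \<bar>x (h j) - a\<bar> < \<epsilon>"
    using assms unfolding LIMSEQ_def dist_real_def by blast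
  have "{n\<in>range h. \<epsilon> \<le> \<bar>x n - a\<bar>} \<subseteq> h ` {..<N}"
  proof
    fix n assume "n \<in> {n\<in>range h. \<epsilon> \<le> \<bar>x n - a\<bar>}"
    then obtain j where "n = h j" "\<epsilon> \<le> \<bar>x (h j) - a\<bar>" by auto
    moreover have "j < N" using N calculation(2) by (meson linorder_not_less)
    ultimately show "n \<in> h ` {..<N}" by auto
  qed
  then show "finite {n\<in>range h. \<epsilon> \<le> \<bar>x n - a\<bar>}" by (rule finite_subset) auto
qed

lemma converges_along_unique:
  assumes "infinite S" "finite (S - S1)" "finite (S - S2)"
    and "converges_along S1 x a" "converges_along S2 x b"
  shows "a = b"
proof (rule ccontr)
  assume "a \<noteq> b"
  define \<epsilon> where "\<epsilon> = \<bar>a - b\<bar> / 2"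
  have "\<epsilon> > 0" using \<open>a \<noteq> b\<close> unfolding \<epsilon>_def by simp
  have "\<not> (\<bar>x n - a\<bar> < \<epsilon> \<and> \<bar>x n - b\<bar> < \<epsilon>)" for n
    unfolding \<epsilon>_def by (smt (verit, best) abs_triangle_ineq4 field_sum_of_halves)
  then have "S \<subseteq> (S - S1) \<union> (S - S2) \<union> {n\<in>S1. \<epsilon> \<le> \<bar>x n - a\<bar>} \<union> {n\<in>S2. \<epsilon> \<le> \<bar>x n - b\<bar>}"
    by (auto simp: not_less[symmetric])
  moreover have "finite ((S - S1) \<union> (S - S2) \<union> {n\<in>S1. \<epsilon> \<le> \<bar>x n - a\<bar>} \<union> {n\<in>S2. \<epsilon> \<le> \<bar>x n - b\<bar>})"
    using assms \<open>\<epsilon> > 0\<close> unfolding converges_along_def by auto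
  ultimately show False using assms(1) finite_subset by blast
qed

lemma CH_dominating_limit_functional:
  assumes CH
  shows "\<exists>L :: (nat \<Rightarrow> real) \<Rightarrow> real. \<forall>g. \<exists>h. (\<forall>j. g j \<le> h j) \<and>
     (\<forall>x a. (\<lambda>j. x (h j)) \<longlonglongrightarrow> a \<longrightarrow> L x = a)"
proof -
  obtain S where dom: "\<And>g. dominating_range (S g) g"
    and dir: "\<And>g1 g2. \<exists>g. finite (S g - S g1) \<and> finite (S g - S g2)"
    using CH_directed_dominating_family[OF assms] by blast
  define L where "L x = (SOME a. \<exists>g. converges_along (S g) x a)" for x
  have L: "L x = a" if "converges_along (S g) x a" for x g a
  proof -
    have "\<exists>g. converges_along (S g) x (L x)" unfolding L_def by (rule someI_ex) (use that in blast)
    then obtain g' where "converges_along (S g') x (L x)" by blast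
    moreover obtain g'' where "finite (S g'' - S g')" "finite (S g'' - S g)" using dir by blast
    ultimately show ?thesis
      using converges_along_unique dominating_range_infinite[OF dom] that by blast
  qed
  have "\<exists>h. (\<forall>j. g j \<le> h j) \<and> (\<forall>x a. (\<lambda>j. x (h j)) \<longlonglongrightarrow> a \<longrightarrow> L x = a)" for g
    using dom[of g] converges_along_range L unfolding dominating_range_def by metis
  then show ?thesis by blast
qed

section \<open>Convergence in probability and augmented \<open>\<sigma>\<close>-algebras\<close>

lemma AE_LIMSEQ_dominating_subseq:
  fixes X :: "nat \<Rightarrow> 'a \<Rightarrow> real" and Z :: "'a \<Rightarrow> real"
  assumes Q: "prob_space Q" and mX: "\<And>n. X n \<in> borel_measurable Q" and mZ: "Z \<in> borel_measurable Q"
    and lim: "\<And>\<epsilon>. \<epsilon> > 0 \<Longrightarrow> ((\<lambda>n. measure Q {\<omega>\<in>space Q. \<epsilon> < \<bar>X n \<omega> - Z \<omega>\<bar>}) \<longlongrightarrow> 0) sequentially"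
  shows "\<exists>g. \<forall>h. (\<forall>j. g j \<le> h j) \<longrightarrow> (AE \<omega> in Q. (\<lambda>j. X (h j) \<omega>) \<longlonglongrightarrow> Z \<omega>)"
proof -
  interpret prob_space Q by (rule Q)
  have "\<exists>N. \<forall>n\<ge>N. measure Q {\<omega>\<in>space Q. (1/2)^k < \<bar>X n \<omega> - Z \<omega>\<bar>} < (1/2)^k" for k :: nat
  proof -
    have "((\<lambda>n. measure Q {\<omega>\<in>space Q. (1/2)^k < \<bar>X n \<omega> - Z \<omega>\<bar>}) \<longlongrightarrow> 0) sequentially"
      by (rule lim) simp
    then have "eventually (\<lambda>n. measure Q {\<omega>\<in>space Q. (1/2)^k < \<bar>X n \<omega> - Z \<omega>\<bar>} < (1/2)^k) sequentially"
      by (rule order_tendstoD(2)) simp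
    then show ?thesis unfolding eventually_sequentially by blast
  qed
  then obtain g where g: "\<And>k n. g k \<le> n \<Longrightarrow> measure Q {\<omega>\<in>space Q. (1/2)^k < \<bar>X n \<omega> - Z \<omega>\<bar>} < (1/2)^k"
    by metis
  have "AE \<omega> in Q. (\<lambda>j. X (h j) \<omega>) \<longlonglongrightarrow> Z \<omega>" if hg: "\<forall>j. g j \<le> h j" for h
  proof -
    define A where "A j = {\<omega>\<in>space Q. (1/2)^j < \<bar>X (h j) \<omega> - Z \<omega>\<bar>}" for j
    have A_sets: "A j \<in> sets Q" for j unfolding A_def using mX mZ by measurable
    have A_le: "measure Q (A j) \<le> (1/2)^j" for j unfolding A_def using g hg by (simp add: less_imp_le)
    have "summable (\<lambda>j. measure Q (A j))"
      by (rule summable_comparison_test'[where g="\<lambda>j. (1/2::real)^j" and N=0]) (auto simp: A_le)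
    then have "AE \<omega> in Q. eventually (\<lambda>j. \<omega> \<in> space Q - A j) sequentially"
      by (intro borel_cantelli_AE1 A_sets) (auto simp: emeasure_eq_measure)
    then show ?thesis
    proof (rule AE_mp, intro AE_I2 impI)
      fix \<omega> assume "eventually (\<lambda>j. \<omega> \<in> space Q - A j) sequentially"
      then have "eventually (\<lambda>j. norm (X (h j) \<omega> - Z \<omega>) \<le> (1/2)^j) sequentially"
        by eventually_elim (auto simp: A_def)
      moreover have "(\<lambda>j. (1/2::real)^j) \<longlonglongrightarrow> 0" by (rule LIMSEQ_realpow_zero) auto
      ultimately have "(\<lambda>j. X (h j) \<omega> - Z \<omega>) \<longlonglongrightarrow> 0" by (rule Lim_null_comparison)
      then show "(\<lambda>j. X (h j) \<omega>) \<longlonglongrightarrow> Z \<omega>" by (rule LIM_zero_cancel)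
    qed
  qed
  then show ?thesis by blast
qed

lemma AE_limit_functional_eq:
  fixes X :: "nat \<Rightarrow> 'a \<Rightarrow> real" and Z :: "'a \<Rightarrow> real" and L :: "(nat \<Rightarrow> real) \<Rightarrow> real"
  assumes L: "\<And>g. \<exists>h. (\<forall>j. g j \<le> h j) \<and> (\<forall>x a. (\<lambda>j. x (h j)) \<longlonglongrightarrow> a \<longrightarrow> L x = a)"
    and Q: "prob_space Q" and mX: "\<And>n. X n \<in> borel_measurable Q" and mZ: "Z \<in> borel_measurable Q"
    and lim: "\<And>\<epsilon>. \<epsilon> > 0 \<Longrightarrow> ((\<lambda>n. measure Q {\<omega>\<in>space Q. \<epsilon> < \<bar>X n \<omega> - Z \<omega>\<bar>}) \<longlongrightarrow> 0) sequentially"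
  shows "\<exists>h. AE \<omega> in Q. (\<lambda>j. X (h j) \<omega>) \<longlonglongrightarrow> Z \<omega> \<and> L (\<lambda>n. X n \<omega>) = Z \<omega>"
proof -
  obtain g where g: "\<And>h. \<forall>j. g j \<le> h j \<Longrightarrow> AE \<omega> in Q. (\<lambda>j. X (h j) \<omega>) \<longlonglongrightarrow> Z \<omega>"
    using AE_LIMSEQ_dominating_subseq[OF Q mX mZ lim] by blast
  obtain h where hg: "\<forall>j. g j \<le> h j" and h: "\<And>x a. (\<lambda>j. x (h j)) \<longlonglongrightarrow> a \<Longrightarrow> L x = a"
    using L by blast
  from hg have "AE \<omega> in Q. (\<lambda>j. X (h j) \<omega>) \<longlonglongrightarrow> Z \<omega>" by (rule g)
  then have "AE \<omega> in Q. (\<lambda>j. X (h j) \<omega>) \<longlonglongrightarrow> Z \<omega> \<and> L (\<lambda>n. X n \<omega>) = Z \<omega>"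
  proof (rule eventually_mono)
    fix \<omega> assume lim: "(\<lambda>j. X (h j) \<omega>) \<longlonglongrightarrow> Z \<omega>"
    then have "L (\<lambda>n. X n \<omega>) = Z \<omega>" by (rule h)
    with lim show "(\<lambda>j. X (h j) \<omega>) \<longlonglongrightarrow> Z \<omega> \<and> L (\<lambda>n. X n \<omega>) = Z \<omega>" ..
  qed
  then show ?thesis by blast
qed

definition augment :: "'a measure \<Rightarrow> 'a measure \<Rightarrow> 'a set set \<Rightarrow> 'a measure" where
  "augment M P G = sigma (space M) (G \<union> null_sets_of M P)"

lemma augment_generator_subset_Pow: "G \<subseteq> sets M \<Longrightarrow> G \<union> null_sets_of M P \<subseteq> Pow (space M)"
  using sets.space_closed[of M] unfolding null_sets_of_def by blast

lemma
  assumes "G \<subseteq> sets M"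
  shows space_augment: "space (augment M P G) = space M"
    and sets_augment: "sets (augment M P G) = sigma_sets (space M) (G \<union> null_sets_of M P)"
  using augment_generator_subset_Pow[OF assms]
  unfolding augment_def by (simp_all add: space_measure_of_conv sets_measure_of)

lemma null_sets_of_sets_augment: "A \<in> null_sets_of M P \<Longrightarrow> G \<subseteq> sets M \<Longrightarrow> A \<in> sets (augment M P G)"
  by (simp add: sets_augment sigma_sets.Basic)

lemma measurable_Fstar_iff:
  assumes "filtration M F" "t \<in> {0..1}"
  shows "f \<in> measurable (sigma (space M) (Fstar M \<P> F t)) borel \<longleftrightarrow>
    (\<forall>P\<in>\<P>. f \<in> borel_measurable (augment M P (F t)))"
proof -
  have G: "F t \<subseteq> sets M" using assms unfolding filtration_def by blast
  define Fs where "Fs = Fstar M \<P> F t"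
  have Fs: "A \<in> Fs \<longleftrightarrow> A \<subseteq> space M \<and> (\<forall>P\<in>\<P>. A \<in> sets (augment M P (F t)))" for A
    unfolding Fs_def Fstar_def sets_augment[OF G] by blast
  then have Pow: "Fs \<subseteq> Pow (space M)" by blast
  have "sigma_sets (space M) Fs \<subseteq> sets (augment M P (F t))" if "P \<in> \<P>" for P
  proof (rule sets.sigma_sets_subset')
    show "Fs \<subseteq> sets (augment M P (F t))" using Fs that by blast
    show "space M \<in> sets (augment M P (F t))" using sets.top[of "augment M P (F t)"] space_augment[OF G] by simp
  qed
  then have "sigma_sets (space M) Fs \<subseteq> Fs"
    using sigma_sets_into_sp[OF Pow] Fs by blast
  then have "sigma_sets (space M) Fs = Fs" using sigma_sets.Basic by blast
  with Pow have "f \<in> measurable (sigma (space M) Fs) borel \<longleftrightarrow>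
      (\<forall>B\<in>sets borel. f -` B \<inter> space M \<in> Fs)"
    by (simp add: measurable_def sets_measure_of space_measure_of_conv)
  also have "\<dots> \<longleftrightarrow> (\<forall>P\<in>\<P>. f \<in> borel_measurable (augment M P (F t)))"
    unfolding Fs by (auto simp: measurable_def space_augment[OF G])
  finally show ?thesis unfolding Fs_def .
qed

lemma measurable_augment_completion:
  assumes G: "G \<subseteq> sets M" and PM: "sets P = sets M"
    and f: "f \<in> borel_measurable (augment M P G)"
  shows "f \<in> borel_measurable (completion P)"
proof -
  have "G \<union> null_sets_of M P \<subseteq> sets (completion P)"
  proof
    fix A assume "A \<in> G \<union> null_sets_of M P"
    then show "A \<in> sets (completion P)"
    proof
      assume "A \<in> G"
      then show ?thesis using G PM by (metis sets_completionI_sets subsetD)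
    next
      assume "A \<in> null_sets_of M P"
      then obtain B where "B \<in> sets M" "A \<subseteq> B" "emeasure P B = 0" unfolding null_sets_of_def by auto
      then have "B \<in> null_sets P" using PM by auto
      then show ?thesis using \<open>A \<subseteq> B\<close> null_sets_completion by blast
    qed
  qed
  moreover have "space (completion P) = space M" using PM sets_eq_imp_space_eq by simp
  ultimately have "sets (augment M P G) \<subseteq> sets (completion P)"
    unfolding sets_augment[OF G] by (metis sets.sigma_sets_subset' sets.top)
  moreover have "space (augment M P G) = space (completion P)"
    using sets_eq_imp_space_eq[OF PM] space_augment[OF G] by simp
  ultimately show ?thesis using f measurable_mono[of borel borel "augment M P G" "completion P"] by blast
qed

lemma borel_measurable_LIMSEQ_outside:
  fixes f :: "nat \<Rightarrow> 'a \<Rightarrow> real" and y :: "'a \<Rightarrow> real"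
  assumes f: "\<And>j. f j \<in> borel_measurable N"
    and E: "\<And>B. B \<subseteq> E \<Longrightarrow> B \<in> sets N"
    and lim: "\<And>\<omega>. \<omega> \<in> space N - E \<Longrightarrow> (\<lambda>j. f j \<omega>) \<longlonglongrightarrow> y \<omega>"
  shows "y \<in> borel_measurable N"
proof -
  define y' where "y' \<omega> = (if \<omega> \<in> E then 0 else y \<omega>)" for \<omega>
  have "y' \<in> borel_measurable N"
  proof (rule borel_measurable_LIMSEQ_real[where u="\<lambda>j \<omega>. if \<omega> \<in> E then 0 else f j \<omega>"])
    fix \<omega> assume "\<omega> \<in> space N"
    then show "(\<lambda>j. if \<omega> \<in> E then 0 else f j \<omega>) \<longlonglongrightarrow> y' \<omega>"
      using lim[of \<omega>] unfolding y'_def by auto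
  qed (rule measurable_If_set, auto intro: f E)
  show ?thesis
  proof (rule measurableI)
    fix A :: "real set" assume A: "A \<in> sets borel"
    have "y -` A \<inter> space N = (y' -` A \<inter> space N - E) \<union> (y -` A \<inter> space N \<inter> E)"
      unfolding y'_def by auto
    also have "\<dots> \<in> sets N"
      using measurable_sets[OF \<open>y' \<in> _\<close> A] E by (intro sets.Un sets.Diff) auto
    finally show "y -` A \<inter> space N \<in> sets N" .
  qed simp
qed

lemma measurable_augment_AE_LIMSEQ:
  fixes f :: "nat \<Rightarrow> 'a \<Rightarrow> real" and y :: "'a \<Rightarrow> real"
  assumes G: "G \<subseteq> sets M" and PM: "sets P = sets M"
    and f: "\<And>j. f j \<in> borel_measurable (augment M P G)"
    and lim: "AE \<omega> in completion P. (\<lambda>j. f j \<omega>) \<longlonglongrightarrow> y \<omega>"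
  shows "y \<in> borel_measurable (augment M P G)"
proof -
  define E where "E = {\<omega>\<in>space M. \<not> (\<lambda>j. f j \<omega>) \<longlonglongrightarrow> y \<omega>}"
  have sp: "space (completion P) = space M" using PM sets_eq_imp_space_eq by simp
  from lim obtain N where "E \<subseteq> N" "emeasure (completion P) N = 0" "N \<in> sets (completion P)"
    unfolding E_def sp[symmetric] by (rule AE_E)
  then have "N \<in> null_sets (completion P)" by auto
  then obtain N' where "N' \<in> null_sets P" "N \<subseteq> N'"
    using null_sets_completion_iff2[THEN iffD1] by metis
  with \<open>E \<subseteq> N\<close> have "E \<subseteq> N'" "N' \<in> sets M" "emeasure P N' = 0" using PM by auto
  then have "B \<in> sets (augment M P G)" if "B \<subseteq> E" for B
    using that unfolding E_def by (intro null_sets_of_sets_augment[OF _ G]) (unfold null_sets_of_def, blast)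
  then show ?thesis
    by (rule borel_measurable_LIMSEQ_outside[where E=E, OF f]) (auto simp: E_def space_augment[OF G])
qed

lemma AE_limit_functional_eq_augment:
  fixes X :: "nat \<Rightarrow> 'a \<Rightarrow> real" and Z :: "'a \<Rightarrow> real" and L :: "(nat \<Rightarrow> real) \<Rightarrow> real"
  assumes L: "\<And>g. \<exists>h. (\<forall>j. g j \<le> h j) \<and> (\<forall>x a. (\<lambda>j. x (h j)) \<longlonglongrightarrow> a \<longrightarrow> L x = a)"
    and G: "G \<subseteq> sets M" and P: "prob_space P" and PM: "sets P = sets M"
    and X: "\<And>n. X n \<in> borel_measurable (augment M P G)" and Z: "Z \<in> borel_measurable M"
    and lim: "\<forall>\<epsilon>>0. ((\<lambda>n. measure (completion P) {\<omega>\<in>space M. \<bar>X n \<omega> - Z \<omega>\<bar> > \<epsilon>}) \<longlongrightarrow> 0) sequentially"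
  shows "\<exists>h. AE \<omega> in completion P. (\<lambda>j. X (h j) \<omega>) \<longlonglongrightarrow> Z \<omega> \<and> L (\<lambda>n. X n \<omega>) = Z \<omega>"
proof (rule AE_limit_functional_eq[OF L])
  show "prob_space (completion P)" using P by (rule prob_space.prob_space_completion)
  show "X n \<in> borel_measurable (completion P)" for n
    by (rule measurable_augment_completion[OF G PM X])
  have "Z \<in> borel_measurable P" using Z measurable_cong_sets[OF PM] by blast
  then show "Z \<in> borel_measurable (completion P)" by (rule measurable_completion)
  have "space (completion P) = space M" using sets_eq_imp_space_eq[OF PM] by simp
  then show "((\<lambda>n. measure (completion P) {\<omega>\<in>space (completion P). \<epsilon> < \<bar>X n \<omega> - Z \<omega>\<bar>}) \<longlongrightarrow> 0) sequentially"
    if "\<epsilon> > 0" for \<epsilon>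
    using lim that by simp
qed

section \<open>Cadlag paths through rational values\<close>

lemma cadlag_path_eq_on_rats:
  fixes f g :: "real \<Rightarrow> real"
  assumes f: "cadlag_path f" and g: "cadlag_path g"
    and eq: "\<And>s. s \<in> \<rat> \<inter> {0..1} \<Longrightarrow> f s = g s" and t: "t \<in> {0..1}"
  shows "f t = g t"
proof (cases "t = 1")
  case False
  with t have t1: "t \<in> {0..<1}" by auto
  have lim: "((\<lambda>s. f s - g s) \<longlongrightarrow> f t - g t) (at_right t)"
    using f g t1 unfolding cadlag_path_def by (intro tendsto_diff) auto
  show ?thesis
  proof (rule ccontr)
    assume "f t \<noteq> g t"
    then have "eventually (\<lambda>s. dist (f s - g s) (f t - g t) < \<bar>f t - g t\<bar>) (at_right t)"
      using lim by (auto simp: tendsto_iff)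
    then obtain b where "b > t" and b: "\<And>s. t < s \<Longrightarrow> s < b \<Longrightarrow> dist (f s - g s) (f t - g t) < \<bar>f t - g t\<bar>"
      unfolding eventually_at_right_field by blast
    obtain r where r: "r \<in> \<rat>" "t < r" "r < min b 1"
      using Rats_dense_in_real[of t "min b 1"] \<open>b > t\<close> t1 by auto
    then have "f r - g r = 0" using eq t1 by auto
    moreover have "dist (f r - g r) (f t - g t) < \<bar>f t - g t\<bar>" using b r by auto
    ultimately show False by (simp add: dist_real_def)
  qed
qed (use eq in auto)

definition cadlag_from_rats :: "(real \<Rightarrow> real) \<Rightarrow> real \<Rightarrow> real" where
  "cadlag_from_rats z =
     (if \<exists>f. cadlag_path f \<and> (\<forall>s\<in>\<rat> \<inter> {0..1}. f s = z s)
      then SOME f. cadlag_path f \<and> (\<forall>s\<in>\<rat> \<inter> {0..1}. f s = z s) else (\<lambda>_. 0))"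

lemma cadlag_path_cadlag_from_rats: "cadlag_path (cadlag_from_rats z)"
proof (cases "\<exists>f. cadlag_path f \<and> (\<forall>s\<in>\<rat> \<inter> {0..1}. f s = z s)")
  case True
  then have "cadlag_from_rats z = (SOME f. cadlag_path f \<and> (\<forall>s\<in>\<rat> \<inter> {0..1}. f s = z s))"
    unfolding cadlag_from_rats_def by (rule if_P)
  then show ?thesis using someI_ex[OF True] by simp
next
  case False
  then have "cadlag_from_rats z = (\<lambda>_. 0)" unfolding cadlag_from_rats_def by (rule if_not_P)
  moreover have "cadlag_path (\<lambda>_. 0)" unfolding cadlag_path_def by (blast intro: tendsto_const)
  ultimately show ?thesis by simp
qed

lemma cadlag_from_rats_eq:
  assumes f: "cadlag_path f" and eq: "\<And>s. s \<in> \<rat> \<inter> {0..1} \<Longrightarrow> f s = z s" and t: "t \<in> {0..1}"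
  shows "cadlag_from_rats z t = f t"
proof (rule cadlag_path_eq_on_rats[OF cadlag_path_cadlag_from_rats f _ t])
  have ex: "\<exists>f. cadlag_path f \<and> (\<forall>s\<in>\<rat> \<inter> {0..1}. f s = z s)" using f eq by blast
  then have "cadlag_from_rats z = (SOME f. cadlag_path f \<and> (\<forall>s\<in>\<rat> \<inter> {0..1}. f s = z s))"
    unfolding cadlag_from_rats_def by (rule if_P)
  then have "\<forall>s\<in>\<rat> \<inter> {0..1}. cadlag_from_rats z s = z s" using someI_ex[OF ex] by simp
  then show "cadlag_from_rats z s = f s" if "s \<in> \<rat> \<inter> {0..1}" for s using eq that by simp
qed

lemma AE_cadlag_from_rats_eq:
  fixes z X :: "real \<Rightarrow> 'a \<Rightarrow> real"
  assumes X: "\<And>\<omega>. \<omega> \<in> space Q \<Longrightarrow> cadlag_path (\<lambda>t. X t \<omega>)"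
    and z: "\<And>s. s \<in> \<rat> \<inter> {0..1} \<Longrightarrow> AE \<omega> in Q. z s \<omega> = X s \<omega>"
  shows "AE \<omega> in Q. \<forall>t\<in>{0..1}. cadlag_from_rats (\<lambda>s. z s \<omega>) t = X t \<omega>"
proof -
  have "countable (\<rat> \<inter> {0..1 :: real})" using countable_rat by blast
  then have "AE \<omega> in Q. \<forall>s\<in>\<rat> \<inter> {0..1}. z s \<omega> = X s \<omega>" using z by (simp add: AE_ball_countable)
  then show ?thesis
  proof (rule AE_mp, intro AE_I2 impI ballI)
    fix \<omega> and t :: real assume "\<omega> \<in> space Q" "\<forall>s\<in>\<rat> \<inter> {0..1}. z s \<omega> = X s \<omega>" "t \<in> {0..1}"
    then show "cadlag_from_rats (\<lambda>s. z s \<omega>) t = X t \<omega>"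
      by (intro cadlag_from_rats_eq X) auto
  qed
qed

theorem lemma2p5:
  fixes M :: "'a measure" and F :: "real \<Rightarrow> 'a set set" and \<P> :: "'a measure set"
    and Yn :: "nat \<Rightarrow> real \<Rightarrow> 'a \<Rightarrow> real"
    and YP :: "'a measure \<Rightarrow> real \<Rightarrow> 'a \<Rightarrow> real"
  assumes CH: CH
    and rc: "right_continuous_filtration M F"
    and probs: "\<forall>P\<in>\<P>. prob_space P \<and> sets P = sets M"
    and Yn_adapted: "\<forall>n. adapted M (Fstar M \<P> F) (Yn n)"
    and Yn_cadlag: "\<forall>n. cadlag M (Yn n)"
    and YP_process: "\<forall>P\<in>\<P>. (\<forall>t\<in>{0..1}. YP P t \<in> borel_measurable M) \<and> cadlag M (YP P)"
    and limits: "\<forall>P\<in>\<P>. \<forall>t\<in>{0..1}. \<forall>\<epsilon>>0.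
           ((\<lambda>n. measure (completion P) {\<omega>\<in>space M. \<bar>Yn n t \<omega> - YP P t \<omega>\<bar> > \<epsilon>}) \<longlongrightarrow> 0) sequentially"
  shows "\<exists>Y :: real \<Rightarrow> 'a \<Rightarrow> real. adapted M (Fstar M \<P> F) Y \<and> cadlag M Y \<and>
     (\<forall>P\<in>\<P>. AE \<omega> in completion P. \<forall>t\<in>{0..1}. Y t \<omega> = YP P t \<omega>)"
proof -
  obtain L :: "(nat \<Rightarrow> real) \<Rightarrow> real"
    where L: "\<And>g. \<exists>h. (\<forall>j. g j \<le> h j) \<and> (\<forall>x a. (\<lambda>j. x (h j)) \<longlonglongrightarrow> a \<longrightarrow> L x = a)"
    using CH_dominating_limit_functional[OF CH] by blast
  have fil: "filtration M F" using rc unfolding right_continuous_filtration_def by blast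
  then have G: "F t \<subseteq> sets M" if "t \<in> {0..1}" for t using that unfolding filtration_def by blast
  have PM: "sets P = sets M" if "P \<in> \<P>" for P using probs that by blast
  then have space_P: "space (completion P) = space M" if "P \<in> \<P>" for P
    using sets_eq_imp_space_eq[OF PM[OF that]] by simp
  have Yn_augment: "Yn n t \<in> borel_measurable (augment M P (F t))" if "P \<in> \<P>" "t \<in> {0..1}" for P n t
    using Yn_adapted measurable_Fstar_iff[OF fil \<open>t \<in> {0..1}\<close>] that unfolding adapted_def by blast
  have limit: "\<exists>h. AE \<omega> in completion P. (\<lambda>j. Yn (h j) t \<omega>) \<longlonglongrightarrow> YP P t \<omega> \<and> L (\<lambda>n. Yn n t \<omega>) = YP P t \<omega>"
    if P: "P \<in> \<P>" and t: "t \<in> {0..1}" for P t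
    using probs YP_process limits P t
    by (intro AE_limit_functional_eq_augment[OF L G[OF t] _ PM[OF P] Yn_augment[OF P t]]) auto
  define Y where "Y t \<omega> = cadlag_from_rats (\<lambda>s. L (\<lambda>n. Yn n s \<omega>)) t" for t \<omega>
  have AE_eq: "AE \<omega> in completion P. \<forall>t\<in>{0..1}. Y t \<omega> = YP P t \<omega>" if P: "P \<in> \<P>" for P
    unfolding Y_def
  proof (rule AE_cadlag_from_rats_eq)
    show "cadlag_path (\<lambda>t. YP P t \<omega>)" if "\<omega> \<in> space (completion P)" for \<omega>
      using YP_process P that space_P[OF P] unfolding cadlag_def by auto
    show "AE \<omega> in completion P. L (\<lambda>n. Yn n s \<omega>) = YP P s \<omega>" if "s \<in> \<rat> \<inter> {0..1}" for s
      using limit[OF P, of s] that by (auto elim: AE_mp intro: AE_I2)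
  qed
  have "Y t \<in> borel_measurable (augment M P (F t))" if P: "P \<in> \<P>" and t: "t \<in> {0..1}" for P t
  proof -
    obtain h where "AE \<omega> in completion P. (\<lambda>j. Yn (h j) t \<omega>) \<longlonglongrightarrow> YP P t \<omega> \<and> L (\<lambda>n. Yn n t \<omega>) = YP P t \<omega>"
      using limit[OF P t] by blast
    with AE_eq[OF P] have "AE \<omega> in completion P. (\<lambda>j. Yn (h j) t \<omega>) \<longlonglongrightarrow> Y t \<omega>"
      by eventually_elim (use t in auto)
    then show ?thesis by (rule measurable_augment_AE_LIMSEQ[OF G[OF t] PM[OF P] Yn_augment[OF P t]])
  qed
  then have "adapted M (Fstar M \<P> F) Y" unfolding adapted_def using measurable_Fstar_iff[OF fil] by blast
  moreover have "cadlag M Y" unfolding cadlag_def Y_def using cadlag_path_cadlag_from_rats by simp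
  ultimately show ?thesis using AE_eq by blast
qed

end
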